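(* Let $p\in(0,1)$, $\alpha\in(0,1]$, $0\le h_1<\dots<h_N\le1$, and nonnegative weights $f_0^S(h_j),f_0^{NS}(h_j)$, $j=1,\dots,N$, each summing to $1$; set $f_0(h_j)=\alpha f_0^S(h_j)+(1-\alpha)f_0^{NS}(h_j)$ with $f_0(h_N)>0$, and $f_0([h_i,1])=\sum_{j\ge i}f_0(h_j)$. Let $m_0^{S,j}\in[-1,1]$ be given. Let $f^{NS,1},\dots,f^{NS,N}\in C([0,+\infty),P([-1,1]))$ (weak topology) with initial data $f_0^{NS,i}$, write $m^{NS,j}(t)=\int_{-1}^1w\,f^{NS,j}(t,dw)$, $$m(t)=\alpha\sum_{j}f_0^S(h_j)m_0^{S,j}+(1-\alpha)\sum_jf_0^{NS}(h_j)m^{NS,j}(t),\quad \beta_i(t)=\alpha\sum_{j\ge i}f_0^S(h_j)m_0^{S,j}+(1-\alpha)\sum_{j\ge i}f_0^{NS}(h_j)m^{NS,j}(t),$$ and assume that for all $i$, $t\ge0$ and $\phi\in C^1([-1,1])$, $$\int\phi\,df^{NS,i}(t)=\int\phi\,df_0^{NS,i}+\int_0^t\!\!\int_{-1}^1\phi'(w)\Big[p\big(m(s)-w\big)+(1-p)\big(\beta_i(s)-f_0([h_i,1])w\big)\Big]f^{NS,i}(s,dw)\,ds.$$ Let $A=(A_{ij})$ be the $N\times N$ matrix with $A_{ii}=(1-\alpha)f_0^{NS}(h_i)-\big(p+(1-p)f_0([h_i,1])\big)$ and $A_{ij}=(1-\alpha)\big[p+(1-p)1_{\{j\ge i\}}\big]f_0^{NS}(h_j)$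 for $i\ne j$, and $B=(B_1,\dots,B_N)^T$ with $B_i=\alpha\sum_{j=1}^Nm_0^{S,j}\big(p+(1-p)1_{\{j\ge i\}}\big)f_0^S(h_j)$. Then $A$ is invertible and, with $(m_\infty^{NS,1},\dots,m_\infty^{NS,N})^T=-A^{-1}B$, we have $f^{NS,i}(t)\to\delta_{m_\infty^{NS,i}}$ weakly as $t\to+\infty$ for every $i=1,\dots,N$.
   Context: $P([-1,1])$ is the set of Borel probability measures on $[-1,1]$; $\delta_x$ is the Dirac mass at $x$. Interpretation: $f^{NS,i}(t)$ is the opinion distribution of non-stubborn individuals at hierarchy level $h_i$, $\alpha$ the fraction of stubborn individuals, $m_0^{S,j}$ the mean opinion of stubborn individuals at level $h_j$, $p$ the probability that a lower-ranked individual convinces a higher-ranked one. *)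

theory Defs
  imports "HOL-Probability.Probability" "Jordan_Normal_Form.Gauss_Jordan_Elimination"
begin

definition prob_on_interval :: "real measure \<Rightarrow> bool" where
  "prob_on_interval M \<longleftrightarrow> prob_space M \<and> sets M = sets borel \<and> emeasure M {-1..1} = 1"

definition dirac :: "real \<Rightarrow> real measure" where
  "dirac x = return borel x"

text \<open>Since all measures are concentrated
  on [-1,1], continuous functions on the real line give the same test class as C([-1,1]).\<close>
definition weak_conv_at_top :: "(real \<Rightarrow> real measure) \<Rightarrow> real measure \<Rightarrow> bool" where
  "weak_conv_at_top F \<mu> \<longleftrightarrow>
     (\<forall>\<phi>::real\<Rightarrow>real. continuous_on UNIV \<phi> \<longrightarrow>
        ((\<lambda>t. \<integral>w. \<phi> w \<partial>(F t)) \<longlongrightarrow> (\<integral>w. \<phi> w \<partial>\<mu>)) at_top)"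

definition weak_continuous_on :: "real set \<Rightarrow> (real \<Rightarrow> real measure) \<Rightarrow> bool" where
  "weak_continuous_on T F \<longleftrightarrow>
     (\<forall>\<phi>::real\<Rightarrow>real. continuous_on UNIV \<phi> \<longrightarrow> continuous_on T (\<lambda>t. \<integral>w. \<phi> w \<partial>(F t)))"

end

theory Submission
  imports Defs "Jordan_Normal_Form.Determinant"
begin

(* Testing the equation against w and w^2 closes the moment hierarchy: with
   c_i = p + (1 - p) f_0([h_i,1]) >= p, the means solve the affine system m' = A m + B and the
   variances solve V_i' = -2 c_i V_i.  The matrix A has nonnegative off-diagonal entries and row
   sums at most -alpha p, so a barrier argument shows that every solution of x' = A x decays
   exponentially.  Hence A has trivial kernel, the means converge to the equilibrium -A^-1 B, the
   variances vanish, and a probability measure on [-1,1] whose second moment about x is small is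
   weakly close to the Dirac mass at x. *)

lemma first_touching_time:
  fixes g :: "nat \<Rightarrow> real \<Rightarrow> real"
  assumes cont: "\<And>i. i < n \<Longrightarrow> continuous_on {0..} (g i)"
    and start: "\<And>i. i < n \<Longrightarrow> g i 0 < 0"
    and touch: "i1 < n" "0 \<le> t1" "0 \<le> g i1 t1"
  obtains t0 i where "0 < t0" "i < n" "g i t0 = 0"
    and "\<And>j. j < n \<Longrightarrow> g j t0 \<le> 0"
    and "\<And>j s. j < n \<Longrightarrow> 0 \<le> s \<Longrightarrow> s < t0 \<Longrightarrow> g j s < 0"
proof -
  define S where "S = (\<Union>i<n. {0..} \<inter> g i -` {0..})"
  have "closed S"
    unfolding S_def by (intro closed_UN finite_lessThan ballI continuous_closed_preimage cont) auto
  moreover have "t1 \<in> S" and "bdd_below S"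
    using touch unfolding S_def by (auto intro!: bdd_belowI[of _ 0])
  ultimately have "Inf S \<in> S"
    using closed_contains_Inf by blast
  define t0 where "t0 = Inf S"
  have before: "g j s < 0" if "j < n" "0 \<le> s" "s < t0" for j s
  proof (rule ccontr)
    assume "\<not> g j s < 0"
    with that have "s \<in> S" unfolding S_def by (force simp: not_less)
    then have "t0 \<le> s" unfolding t0_def using \<open>bdd_below S\<close> by (rule cInf_lower)
    with that show False by simp
  qed
  obtain i where i: "i < n" "0 \<le> t0" "0 \<le> g i t0"
    using \<open>Inf S \<in> S\<close> unfolding S_def t0_def by auto
  have "t0 \<noteq> 0"
    using i start[OF i(1)] by auto
  with i have "0 < t0" by simp
  have at_t0: "g j t0 \<le> 0" if "j < n" for j
  proof -
    have "closure {0..<t0} \<subseteq> {0..} \<inter> g j -` {..0}"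
    proof (rule closure_minimal)
      show "{0..<t0} \<subseteq> {0..} \<inter> g j -` {..0}"
        using before[OF that] by (auto simp: less_imp_le)
      show "closed ({0..} \<inter> g j -` {..0})"
        by (intro continuous_closed_preimage cont that) auto
    qed
    moreover have "t0 \<in> closure {0..<t0}"
      using \<open>0 < t0\<close> by simp
    ultimately show ?thesis by auto
  qed
  show thesis
    by (rule that[OF \<open>0 < t0\<close> i(1) _ at_t0 before]) (use i at_t0[OF i(1)] in auto)
qed

lemma has_real_derivative_nonneg_at_first_zero:
  fixes g :: "real \<Rightarrow> real"
  assumes "(g has_real_derivative D) (at t0)" and "0 < t0" "g t0 = 0"
    and before: "\<And>s. 0 \<le> s \<Longrightarrow> s < t0 \<Longrightarrow> g s < 0"
  shows "0 \<le> D"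
proof (rule ccontr)
  assume "\<not> 0 \<le> D"
  then have "D < 0" by simp
  from DERIV_neg_dec_left[OF assms(1) this] obtain d
    where "0 < d" "\<And>h. 0 < h \<Longrightarrow> h < d \<Longrightarrow> g t0 < g (t0 - h)"
    by blast
  then have "0 < g (t0 - min (d / 2) (t0 / 2))"
    using assms(2,3) by simp
  moreover have "g (t0 - min (d / 2) (t0 / 2)) < 0"
    using before assms(2) \<open>0 < d\<close> by simp
  ultimately show False by simp
qed

lemma mult_mat_vec_nth_sum:
  assumes "A \<in> carrier_mat m n" "v \<in> carrier_vec n" "i < m"
  shows "(A *\<^sub>v v) $ i = (\<Sum>j<n. A $$ (i, j) * v $ j)"
  using assms by (auto simp: scalar_prod_def lessThan_atLeast0 intro: sum.cong)

lemma mat_inverse_eq_Some_if_kernel_trivial: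
  fixes A :: "'a :: field mat"
  assumes A: "A \<in> carrier_mat n n"
    and kernel: "\<And>v. v \<in> carrier_vec n \<Longrightarrow> A *\<^sub>v v = 0\<^sub>v n \<Longrightarrow> v = 0\<^sub>v n"
  shows "\<exists>Ai. mat_inverse A = Some Ai \<and> A * Ai = 1\<^sub>m n \<and> Ai * A = 1\<^sub>m n \<and> Ai \<in> carrier_mat n n"
proof -
  have "Determinant.det A \<noteq> 0"
    using det_0_iff_vec_prod_zero_field[OF A] kernel by blast
  then have "A \<in> Units (ring_mat TYPE('a) n ())"
    by (rule det_non_zero_imp_unit[OF A])
  then obtain Ai where "mat_inverse A = Some Ai"
    using mat_inverse(1)[OF A, of "()"] by (cases "mat_inverse A") auto
  with mat_inverse(2)[OF A] show ?thesis by blast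
qed

locale metzler_stable =
  fixes n :: nat and A :: "real mat" and \<gamma> :: real
  assumes off_diag_nonneg: "\<And>i j. i < n \<Longrightarrow> j < n \<Longrightarrow> i \<noteq> j \<Longrightarrow> 0 \<le> A $$ (i, j)"
    and row_sum_le: "\<And>i. i < n \<Longrightarrow> (\<Sum>j<n. A $$ (i, j)) \<le> - \<gamma>"
    and rate_pos: "0 < \<gamma>"
begin

lemma row_mult_le_at_max:
  assumes "i < n" and max: "\<And>j. j < n \<Longrightarrow> x j \<le> x i"
  shows "(\<Sum>j<n. A $$ (i, j) * x j) \<le> (\<Sum>j<n. A $$ (i, j)) * x i"
proof -
  have "(\<Sum>j<n. A $$ (i, j) * x j) \<le> (\<Sum>j<n. A $$ (i, j) * x i)"
  proof (rule sum_mono)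
    fix j assume "j \<in> {..<n}"
    then show "A $$ (i, j) * x j \<le> A $$ (i, j) * x i"
      using assms off_diag_nonneg[of i j] by (cases "j = i") (auto intro: mult_left_mono)
  qed
  then show ?thesis by (simp add: sum_distrib_right)
qed

(* At the first time t0 some component reaches the barrier E = K exp (-gamma t0 / 2), that
   component is maximal, so its slope is at most -gamma E, below the slope -gamma E / 2 of the
   barrier: it cannot have reached the barrier from below. *)
lemma solution_below_exp:
  fixes x :: "nat \<Rightarrow> real \<Rightarrow> real"
  assumes cont: "\<And>i. i < n \<Longrightarrow> continuous_on {0..} (x i)"
    and deriv: "\<And>i t. i < n \<Longrightarrow> 0 < t \<Longrightarrow>
      (x i has_real_derivative (\<Sum>j<n. A $$ (i, j) * x j t)) (at t)"
    and "0 < K" and init: "\<And>i. i < n \<Longrightarrow> x i 0 < K"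
    and "i < n" "0 \<le> t"
  shows "x i t < K * exp (- (\<gamma> / 2) * t)"
proof (rule ccontr)
  define g where "g i t = x i t - K * exp (- (\<gamma> / 2) * t)" for i t
  assume "\<not> ?thesis"
  then have touch: "0 \<le> g i t" by (simp add: g_def)
  have g_cont: "continuous_on {0..} (g j)" if "j < n" for j
    unfolding g_def by (intro continuous_intros cont that)
  have g_start: "g j 0 < 0" if "j < n" for j
    using init[OF that] by (simp add: g_def)
  obtain t0 k where t0: "0 < t0" "k < n" "g k t0 = 0"
    and at_t0: "\<And>j. j < n \<Longrightarrow> g j t0 \<le> 0"
    and before: "\<And>j s. j < n \<Longrightarrow> 0 \<le> s \<Longrightarrow> s < t0 \<Longrightarrow> g j s < 0"
    using first_touching_time[of n g, OF g_cont g_start \<open>i < n\<close> \<open>0 \<le> t\<close> touch] by blast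
  define E where "E = K * exp (- (\<gamma> / 2) * t0)"
  have "0 < E" using \<open>0 < K\<close> by (simp add: E_def)
  have "(\<Sum>j<n. A $$ (k, j) * x j t0) \<le> (\<Sum>j<n. A $$ (k, j)) * E"
    using row_mult_le_at_max[of k "\<lambda>j. x j t0"] t0 at_t0 by (simp add: g_def E_def)
  also have "\<dots> \<le> - \<gamma> * E"
    using row_sum_le[OF t0(2)] \<open>0 < E\<close> by (intro mult_right_mono) auto
  finally have "(\<Sum>j<n. A $$ (k, j) * x j t0) \<le> - \<gamma> * E" .
  moreover have "\<gamma> / 2 * E < \<gamma> * E"
    using rate_pos \<open>0 < E\<close> by simp
  ultimately have neg: "(\<Sum>j<n. A $$ (k, j) * x j t0) + \<gamma> / 2 * E < 0"
    by linarith
  have "(g k has_real_derivative (\<Sum>j<n. A $$ (k, j) * x j t0) + \<gamma> / 2 * E) (at t0)"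
    unfolding g_def[abs_def] E_def
    by (rule derivative_eq_intros deriv[OF t0(2,1)] refl | simp)+
  then have "0 \<le> (\<Sum>j<n. A $$ (k, j) * x j t0) + \<gamma> / 2 * E"
    by (rule has_real_derivative_nonneg_at_first_zero[where g = "g k", OF _ t0(1,3) before[OF t0(2)]])
  with neg show False by simp
qed

lemma solution_tendsto_zero:
  fixes x :: "nat \<Rightarrow> real \<Rightarrow> real"
  assumes cont: "\<And>i. i < n \<Longrightarrow> continuous_on {0..} (x i)"
    and deriv: "\<And>i t. i < n \<Longrightarrow> 0 < t \<Longrightarrow>
      (x i has_real_derivative (\<Sum>j<n. A $$ (i, j) * x j t)) (at t)"
    and "i < n"
  shows "(x i \<longlongrightarrow> 0) at_top"
proof -
  define K where "K = 1 + (\<Sum>j<n. \<bar>x j 0\<bar>)"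
  have K: "\<bar>x j 0\<bar> < K" if "j < n" for j
    using member_le_sum[of j "{..<n}" "\<lambda>j. \<bar>x j 0\<bar>"] that by (simp add: K_def)
  have "0 < K" unfolding K_def by (simp add: add_pos_nonneg sum_nonneg)
  have "\<bar>x i t\<bar> < K * exp (- (\<gamma> / 2) * t)" if "0 \<le> t" for t
  proof -
    have "x i t < K * exp (- (\<gamma> / 2) * t)"
      by (rule solution_below_exp[OF cont deriv \<open>0 < K\<close> _ \<open>i < n\<close> that]) (use K in force)+
    moreover have "- x i t < K * exp (- (\<gamma> / 2) * t)"
    proof (rule solution_below_exp[where x = "\<lambda>j t. - x j t", OF _ _ \<open>0 < K\<close> _ \<open>i < n\<close> that])
      show "continuous_on {0..} (\<lambda>t. - x j t)" if "j < n" for j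
        using cont[OF that] by (intro continuous_intros)
      show "((\<lambda>t. - x j t) has_real_derivative (\<Sum>k<n. A $$ (j, k) * - x k t)) (at t)"
        if "j < n" "0 < t" for j t
        using DERIV_minus[OF deriv[OF that]] by (simp add: sum_negf)
      show "- x j 0 < K" if "j < n" for j
        using K[OF that] by simp
    qed
    ultimately show ?thesis by (simp add: abs_less_iff)
  qed
  then have "\<forall>\<^sub>F t in at_top. norm (x i t) \<le> K * exp (- (\<gamma> / 2) * t)"
    by (auto intro!: eventually_at_top_linorderI[of 0] less_imp_le)
  moreover have "((\<lambda>t. K * exp (- (\<gamma> / 2) * t)) \<longlongrightarrow> 0) at_top"
  proof -
    have "filterlim (\<lambda>t. - (\<gamma> / 2) * t) at_bot at_top"
      by (rule filterlim_tendsto_neg_mult_at_bot[OF tendsto_const _ filterlim_ident]) (use rate_pos in simp)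
    then have "((\<lambda>t. exp (- (\<gamma> / 2) * t)) \<longlongrightarrow> 0) at_top"
      by (rule filterlim_compose[OF exp_at_bot])
    then show ?thesis by (rule tendsto_mult_right_zero)
  qed
  ultimately show ?thesis by (rule Lim_null_comparison)
qed

lemma kernel_trivial:
  assumes "A \<in> carrier_mat n n" "v \<in> carrier_vec n" "A *\<^sub>v v = 0\<^sub>v n"
  shows "v = 0\<^sub>v n"
proof (rule eq_vecI)
  fix i assume "i < dim_vec (0\<^sub>v n)"
  then have "i < n" by simp
  have "((\<lambda>t::real. v $ i) \<longlongrightarrow> 0) at_top"
  proof (rule solution_tendsto_zero[where x = "\<lambda>j t. v $ j", OF _ _ \<open>i < n\<close>])
    show "((\<lambda>t. v $ j) has_real_derivative (\<Sum>k<n. A $$ (j, k) * v $ k)) (at t)" if "j < n" for j t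
      using mult_mat_vec_nth_sum[OF assms(1,2) that] assms(3) that by simp
  qed simp
  then show "v $ i = 0\<^sub>v n $ i"
    using \<open>i < n\<close> by (simp add: tendsto_const_iff)
qed (use assms in simp)

lemma invertible:
  assumes "A \<in> carrier_mat n n"
  shows "invertible_mat A"
proof -
  obtain Ai where "A * Ai = 1\<^sub>m n" "Ai * A = 1\<^sub>m n" "Ai \<in> carrier_mat n n"
    using mat_inverse_eq_Some_if_kernel_trivial[OF assms kernel_trivial[OF assms]] by blast
  with assms show ?thesis
    unfolding invertible_mat_def inverts_mat_def by auto
qed

lemma affine_solution_tendsto_equilibrium:
  fixes x :: "nat \<Rightarrow> real \<Rightarrow> real"
  assumes A: "A \<in> carrier_mat n n" and b: "b \<in> carrier_vec n"
    and cont: "\<And>i. i < n \<Longrightarrow> continuous_on {0..} (x i)"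
    and deriv: "\<And>i t. i < n \<Longrightarrow> 0 < t \<Longrightarrow>
      (x i has_real_derivative (\<Sum>j<n. A $$ (i, j) * x j t) + b $ i) (at t)"
    and "i < n"
  shows "(x i \<longlongrightarrow> (- (the (mat_inverse A) *\<^sub>v b)) $ i) at_top"
proof -
  obtain Ai where Ai: "mat_inverse A = Some Ai" "A * Ai = 1\<^sub>m n" "Ai \<in> carrier_mat n n"
    using mat_inverse_eq_Some_if_kernel_trivial[OF A kernel_trivial[OF A]] by blast
  define e where "e j = - (Ai *\<^sub>v b) $ j" for j
  have equilibrium: "(\<Sum>j<n. A $$ (i, j) * e j) = - b $ i" if "i < n" for i
  proof -
    have "(\<Sum>j<n. A $$ (i, j) * e j) = - (A *\<^sub>v (Ai *\<^sub>v b)) $ i"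
      using mult_mat_vec_nth_sum[OF A _ that, of "Ai *\<^sub>v b"] Ai(3) b
      by (simp add: e_def sum_negf)
    also have "A *\<^sub>v (Ai *\<^sub>v b) = b"
      using A Ai b by (simp add: assoc_mult_mat_vec[symmetric])
    finally show ?thesis .
  qed
  have "((\<lambda>t. x i t - e i) \<longlongrightarrow> 0) at_top"
  proof (rule solution_tendsto_zero[where x = "\<lambda>j t. x j t - e j", OF _ _ \<open>i < n\<close>])
    show "continuous_on {0..} (\<lambda>t. x j t - e j)" if "j < n" for j
      using cont[OF that] by (intro continuous_intros)
    show "((\<lambda>t. x j t - e j) has_real_derivative (\<Sum>k<n. A $$ (j, k) * (x k t - e k))) (at t)"
      if "j < n" "0 < t" for j t
    proof -
      have "(\<Sum>k<n. A $$ (j, k) * (x k t - e k)) = (\<Sum>k<n. A $$ (j, k) * x k t) + b $ j"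
        using equilibrium[OF that(1)] by (simp add: right_diff_distrib sum_subtractf)
      then show ?thesis
        using DERIV_diff[OF deriv[OF that] DERIV_const] by simp
    qed
  qed
  then have "(x i \<longlongrightarrow> e i) at_top"
    unfolding LIM_zero_iff .
  moreover have "e i = (- (the (mat_inverse A) *\<^sub>v b)) $ i"
    using \<open>i < n\<close> Ai(1,3) b by (simp add: e_def)
  ultimately show ?thesis by simp
qed

end

lemma prob_on_interval_AE_in_interval:
  assumes "prob_on_interval M"
  shows "AE w in M. w \<in> {-1..1}"
proof -
  interpret prob_space M
    using assms by (simp add: prob_on_interval_def)
  have "{-1..1::real} \<in> events"
    using assms by (simp add: prob_on_interval_def)
  moreover have "prob {-1..1} = 1"
    using assms by (simp add: prob_on_interval_def emeasure_eq_measure)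
  ultimately show ?thesis
    by (simp only: AE_in_set_eq_1)
qed

lemma prob_on_interval_integrable:
  fixes g :: "real \<Rightarrow> real"
  assumes M: "prob_on_interval M" and g: "continuous_on UNIV g"
  shows "integrable M g"
proof -
  interpret prob_space M
    using M by (simp add: prob_on_interval_def)
  have meas: "g \<in> borel_measurable M"
    using M borel_measurable_continuous_onI[OF g]
    by (simp add: prob_on_interval_def cong: measurable_cong_sets)
  have "bounded (g ` {-1..1})"
    by (intro compact_imp_bounded compact_continuous_image continuous_on_subset[OF g]) auto
  then obtain B where B: "\<forall>y \<in> g ` {-1..1}. norm y \<le> B"
    unfolding bounded_iff by blast
  have "AE w in M. norm (g w) \<le> B"
    using prob_on_interval_AE_in_interval[OF M] by eventually_elim (use B in auto)
  then show ?thesis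
    using meas by (rule integrable_const_bound)
qed

lemma prob_on_interval_integral_sq_dev:
  assumes M: "prob_on_interval M"
  shows "(\<integral>w. (w - x)\<^sup>2 \<partial>M) = (\<integral>w. w\<^sup>2 \<partial>M) - 2 * x * (\<integral>w. w \<partial>M) + x\<^sup>2"
proof -
  interpret prob_space M
    using M by (simp add: prob_on_interval_def)
  have "integrable M (\<lambda>w. w)" "integrable M (\<lambda>w. w\<^sup>2)"
    by (intro prob_on_interval_integrable[OF M] continuous_intros)+
  then show ?thesis
    by (simp add: power2_diff prob_space)
qed

lemma continuous_dev_le_eps_plus_quadratic:
  fixes g :: "real \<Rightarrow> real"
  assumes g: "continuous_on UNIV g" and "0 < \<epsilon>"
  shows "\<exists>C \<ge> 0. \<forall>w \<in> {a..b}. \<bar>g w - g x\<bar> \<le> \<epsilon> + C * (w - x)\<^sup>2"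
proof -
  define R where "R = \<bar>a\<bar> + \<bar>b\<bar> + \<bar>x\<bar>"
  have "uniformly_continuous_on {-R..R} g"
    by (intro compact_uniformly_continuous continuous_on_subset[OF g]) auto
  then obtain \<eta> where "0 < \<eta>"
    and \<eta>: "\<And>w y. w \<in> {-R..R} \<Longrightarrow> y \<in> {-R..R} \<Longrightarrow> dist y w < \<eta> \<Longrightarrow> dist (g y) (g w) < \<epsilon>"
    using \<open>0 < \<epsilon>\<close> unfolding uniformly_continuous_on_def by blast
  have "bounded (g ` {-R..R})"
    by (intro compact_imp_bounded compact_continuous_image continuous_on_subset[OF g]) auto
  then obtain M where M: "\<And>w. w \<in> {-R..R} \<Longrightarrow> \<bar>g w\<bar> \<le> M"
    unfolding bounded_iff by fastforce
  have "x \<in> {-R..R}" by (auto simp: R_def)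
  then have "0 \<le> M" using M[of x] by linarith
  define C where "C = 2 * M / \<eta>\<^sup>2"
  have "0 \<le> C" using \<open>0 \<le> M\<close> by (simp add: C_def)
  moreover have "\<bar>g w - g x\<bar> \<le> \<epsilon> + C * (w - x)\<^sup>2" if "w \<in> {a..b}" for w
  proof -
    have "w \<in> {-R..R}" using that by (auto simp: R_def)
    show ?thesis
    proof (cases "\<bar>w - x\<bar> < \<eta>")
      case True
      with \<eta>[OF \<open>x \<in> {-R..R}\<close> \<open>w \<in> {-R..R}\<close>] have "\<bar>g w - g x\<bar> < \<epsilon>"
        by (simp add: dist_real_def)
      moreover have "0 \<le> C * (w - x)\<^sup>2" using \<open>0 \<le> C\<close> by simp
      ultimately show ?thesis by linarith
    next
      case False
      then have "\<eta>\<^sup>2 \<le> \<bar>w - x\<bar>\<^sup>2"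
        using \<open>0 < \<eta>\<close> by (intro power_mono) auto
      then have "2 * M \<le> C * (w - x)\<^sup>2"
        using \<open>0 < \<eta>\<close> \<open>0 \<le> M\<close> by (simp add: C_def field_simps mult_left_mono)
      moreover have "\<bar>g w - g x\<bar> \<le> 2 * M"
        using M[OF \<open>w \<in> {-R..R}\<close>] M[OF \<open>x \<in> {-R..R}\<close>] by arith
      ultimately show ?thesis using \<open>0 < \<epsilon>\<close> by linarith
    qed
  qed
  ultimately show ?thesis by blast
qed


lemma prob_on_interval_integral_dev_le:
  fixes g :: "real \<Rightarrow> real"
  assumes M: "prob_on_interval M" and g: "continuous_on UNIV g"
    and bound: "\<And>w. w \<in> {-1..1} \<Longrightarrow> \<bar>g w - g x\<bar> \<le> \<epsilon> + C * (w - x)\<^sup>2"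
  shows "\<bar>(\<integral>w. g w \<partial>M) - g x\<bar> \<le> \<epsilon> + C * (\<integral>w. (w - x)\<^sup>2 \<partial>M)"
proof -
  interpret prob_space M
    using M by (simp add: prob_on_interval_def)
  have int: "integrable M g" "integrable M (\<lambda>w. (w - x)\<^sup>2)"
    by (intro prob_on_interval_integrable[OF M] g continuous_intros)+
  have "\<bar>(\<integral>w. g w \<partial>M) - g x\<bar> = \<bar>\<integral>w. g w - g x \<partial>M\<bar>"
    using int by (simp add: prob_space)
  also have "\<dots> \<le> (\<integral>w. \<bar>g w - g x\<bar> \<partial>M)"
    using integral_norm_bound[of M "\<lambda>w. g w - g x"] by simp
  also have "\<dots> \<le> (\<integral>w. \<epsilon> + C * (w - x)\<^sup>2 \<partial>M)"
  proof (rule integral_mono_AE)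
    show "AE w in M. \<bar>g w - g x\<bar> \<le> \<epsilon> + C * (w - x)\<^sup>2"
      using prob_on_interval_AE_in_interval[OF M] by eventually_elim (rule bound)
  qed (use int in auto)
  also have "\<dots> = \<epsilon> + C * (\<integral>w. (w - x)\<^sup>2 \<partial>M)"
    using int by (simp add: prob_space)
  finally show ?thesis .
qed

lemma weak_conv_dirac_if_sq_dev_tendsto_zero:
  fixes \<mu> :: "real \<Rightarrow> real measure"
  assumes prob: "\<forall>\<^sub>F t in at_top. prob_on_interval (\<mu> t)"
    and sq_dev: "((\<lambda>t. \<integral>w. (w - x)\<^sup>2 \<partial>\<mu> t) \<longlongrightarrow> 0) at_top"
  shows "weak_conv_at_top \<mu> (dirac x)"
  unfolding weak_conv_at_top_def
proof (intro allI impI)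
  fix g :: "real \<Rightarrow> real"
  assume g: "continuous_on UNIV g"
  have "(\<integral>w. g w \<partial>dirac x) = g x"
    unfolding dirac_def by (rule integral_return) (auto intro: borel_measurable_continuous_onI[OF g])
  moreover have "((\<lambda>t. \<integral>w. g w \<partial>\<mu> t) \<longlongrightarrow> g x) at_top"
  proof (rule tendstoI)
    fix \<epsilon> :: real
    assume "0 < \<epsilon>"
    obtain C where C: "\<And>w. w \<in> {-1..1} \<Longrightarrow> \<bar>g w - g x\<bar> \<le> \<epsilon> / 2 + C * (w - x)\<^sup>2"
      using continuous_dev_le_eps_plus_quadratic[OF g half_gt_zero[OF \<open>0 < \<epsilon>\<close>], where a = "-1" and b = 1 and x = x]
      by blast
    have "((\<lambda>t. \<epsilon> / 2 + C * (\<integral>w. (w - x)\<^sup>2 \<partial>\<mu> t)) \<longlongrightarrow> \<epsilon> / 2 + C * 0) at_top"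
      by (intro tendsto_intros sq_dev)
    then have "\<forall>\<^sub>F t in at_top. \<epsilon> / 2 + C * (\<integral>w. (w - x)\<^sup>2 \<partial>\<mu> t) < \<epsilon>"
      by (rule order_tendstoD(2)) (use \<open>0 < \<epsilon>\<close> in simp)
    with prob show "\<forall>\<^sub>F t in at_top. dist (\<integral>w. g w \<partial>\<mu> t) (g x) < \<epsilon>"
    proof eventually_elim
      case (elim t)
      then show ?case
        using prob_on_interval_integral_dev_le[OF elim(1) g C] by (simp add: dist_real_def)
    qed
  qed
  ultimately show "((\<lambda>t. \<integral>w. g w \<partial>\<mu> t) \<longlongrightarrow> (\<integral>w. g w \<partial>dirac x)) at_top"
    by simp
qed

lemma has_real_derivative_if_eq_integral:
  fixes u G :: "real \<Rightarrow> real"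
  assumes eq: "\<And>t. 0 \<le> t \<Longrightarrow> u t = u 0 + integral {0..t} G"
    and G: "continuous_on {0..} G" and "0 < t"
  shows "(u has_real_derivative G t) (at t)"
proof -
  have "((\<lambda>s. integral {0..s} G) has_vector_derivative G t) (at t within {0..t + 1})"
    by (rule integral_has_vector_derivative) (use \<open>0 < t\<close> in \<open>auto intro: continuous_on_subset[OF G]\<close>)
  moreover have "at t within {0..t + 1} = at t"
    by (rule at_within_interior) (use \<open>0 < t\<close> in auto)
  ultimately have "((\<lambda>s. integral {0..s} G) has_real_derivative G t) (at t)"
    by (simp add: has_real_derivative_iff_has_vector_derivative)
  then have "((\<lambda>s. u 0 + integral {0..s} G) has_real_derivative G t) (at t)"
    using DERIV_add[OF DERIV_const[of "u 0" "at t"]] by simp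
  then show ?thesis
  proof (rule has_field_derivative_transform_within_open[where S = "{0<..}"])
    show "u 0 + integral {0..s} G = u s" if "s \<in> {0<..}" for s
      using eq[of s] that by simp
  qed (use \<open>0 < t\<close> in auto)
qed

locale linear_drift_solution =
  fixes f :: "real \<Rightarrow> real measure" and P :: "real \<Rightarrow> real" and c :: real
  assumes prob: "\<And>t. 0 \<le> t \<Longrightarrow> prob_on_interval (f t)"
    and weak_cont: "weak_continuous_on {0..} f"
    and P_cont: "continuous_on {0..} P"
    and weak_eq: "\<And>t \<phi> \<phi>'. 0 \<le> t \<Longrightarrow> \<forall>w. (\<phi> has_real_derivative \<phi>' w) (at w) \<Longrightarrow>
      continuous_on UNIV \<phi>' \<Longrightarrow>
      (\<integral>w. \<phi> w \<partial>f t) = (\<integral>w. \<phi> w \<partial>f 0) + integral {0..t} (\<lambda>s. \<integral>w. \<phi>' w * (P s - c * w) \<partial>f s)"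
begin

lemma continuous_on_integral:
  fixes \<phi> :: "real \<Rightarrow> real"
  shows "continuous_on UNIV \<phi> \<Longrightarrow> continuous_on {0..} (\<lambda>t. \<integral>w. \<phi> w \<partial>f t)"
  by (rule weak_cont[unfolded weak_continuous_on_def, rule_format])

lemma integral_has_derivative:
  assumes \<phi>: "\<forall>w. (\<phi> has_real_derivative \<phi>' w) (at w)" "continuous_on UNIV \<phi>'"
    and G: "\<And>s. 0 \<le> s \<Longrightarrow> (\<integral>w. \<phi>' w * (P s - c * w) \<partial>f s) = G s"
    and "continuous_on {0..} G" and "0 < t"
  shows "((\<lambda>t. \<integral>w. \<phi> w \<partial>f t) has_real_derivative G t) (at t)"
proof (rule has_real_derivative_if_eq_integral)
  fix t :: real
  assume "0 \<le> t"
  have "integral {0..t} (\<lambda>s. \<integral>w. \<phi>' w * (P s - c * w) \<partial>f s) = integral {0..t} G"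
    by (rule integral_cong) (simp add: G)
  then show "(\<integral>w. \<phi> w \<partial>f t) = (\<integral>w. \<phi> w \<partial>f 0) + integral {0..t} G"
    using weak_eq[OF \<open>0 \<le> t\<close> \<phi>] by simp
qed (fact assms)+

lemma mean_has_derivative:
  assumes "0 < t"
  shows "((\<lambda>t. \<integral>w. w \<partial>f t) has_real_derivative P t - c * (\<integral>w. w \<partial>f t)) (at t)"
proof (rule integral_has_derivative[where \<phi> = "\<lambda>w. w" and \<phi>' = "\<lambda>_. 1"])
  show "(\<integral>w. 1 * (P s - c * w) \<partial>f s) = P s - c * (\<integral>w. w \<partial>f s)" if "0 \<le> s" for s
  proof -
    interpret prob_space "f s"
      using prob[OF that] by (simp add: prob_on_interval_def)
    show ?thesis
      using prob_on_interval_integrable[OF prob[OF that] continuous_on_id] by (simp add: prob_space)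
  qed
  show "continuous_on {0..} (\<lambda>s. P s - c * (\<integral>w. w \<partial>f s))"
    by (intro continuous_intros P_cont continuous_on_integral)
qed (auto intro: \<open>0 < t\<close>)

lemma second_moment_has_derivative:
  assumes "0 < t"
  shows "((\<lambda>t. \<integral>w. w\<^sup>2 \<partial>f t) has_real_derivative
    2 * P t * (\<integral>w. w \<partial>f t) - 2 * c * (\<integral>w. w\<^sup>2 \<partial>f t)) (at t)"
proof (rule integral_has_derivative[where \<phi> = "\<lambda>w. w\<^sup>2" and \<phi>' = "\<lambda>w. 2 * w"])
  show "(\<integral>w. 2 * w * (P s - c * w) \<partial>f s) = 2 * P s * (\<integral>w. w \<partial>f s) - 2 * c * (\<integral>w. w\<^sup>2 \<partial>f s)"
    if "0 \<le> s" for s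
  proof -
    have "integrable (f s) (\<lambda>w. w)" "integrable (f s) (\<lambda>w. w\<^sup>2)"
      by (intro prob_on_interval_integrable[OF prob[OF that]] continuous_intros)+
    moreover have "2 * w * (P s - c * w) = 2 * P s * w - 2 * c * w\<^sup>2" for w
      by (simp add: algebra_simps power2_eq_square)
    ultimately show ?thesis by simp
  qed
  show "continuous_on {0..} (\<lambda>s. 2 * P s * (\<integral>w. w \<partial>f s) - 2 * c * (\<integral>w. w\<^sup>2 \<partial>f s))"
    by (intro continuous_intros P_cont continuous_on_integral)
  show "\<forall>w. ((\<lambda>w. w\<^sup>2) has_real_derivative 2 * w) (at w)"
    using DERIV_pow[of 2] by simp
qed (auto intro: continuous_intros \<open>0 < t\<close>)

(* The variance solves V' = -2 c V, the 1 x 1 case of the Metzler estimate. *)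
lemma variance_tendsto_zero:
  assumes "0 < c"
  shows "((\<lambda>t. (\<integral>w. w\<^sup>2 \<partial>f t) - (\<integral>w. w \<partial>f t)\<^sup>2) \<longlongrightarrow> 0) at_top"
proof -
  define V where "V t = (\<integral>w. w\<^sup>2 \<partial>f t) - (\<integral>w. w \<partial>f t)\<^sup>2" for t
  interpret scalar: metzler_stable 1 "mat 1 1 (\<lambda>_. - (2 * c))" "2 * c"
    using assms by unfold_locales auto
  have deriv: "(V has_real_derivative - (2 * c) * V t) (at t)" if "0 < t" for t
    using DERIV_diff[OF second_moment_has_derivative[OF that]
        DERIV_power[OF mean_has_derivative[OF that], of 2]]
    unfolding V_def by (simp add: algebra_simps power2_eq_square)
  have "((\<lambda>_. V) (0::nat) \<longlongrightarrow> 0) at_top"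
  proof (rule scalar.solution_tendsto_zero)
    show "continuous_on {0..} V"
      unfolding V_def by (intro continuous_intros continuous_on_integral)
    show "(V has_real_derivative (\<Sum>j<1. mat 1 1 (\<lambda>_. - (2 * c)) $$ (i, j) * V t)) (at t)"
      if "i < 1" "0 < t" for i t
      using deriv[OF that(2)] that(1) by simp
  qed simp
  then show ?thesis by (simp only: V_def[abs_def])
qed

lemma weak_conv_dirac:
  assumes "0 < c" and mean: "((\<lambda>t. \<integral>w. w \<partial>f t) \<longlongrightarrow> x) at_top"
  shows "weak_conv_at_top f (dirac x)"
proof (rule weak_conv_dirac_if_sq_dev_tendsto_zero)
  show prob_ev: "\<forall>\<^sub>F t in at_top. prob_on_interval (f t)"
    by (auto intro!: eventually_at_top_linorderI[of 0] prob)
  have "((\<lambda>t. ((\<integral>w. w\<^sup>2 \<partial>f t) - (\<integral>w. w \<partial>f t)\<^sup>2) + ((\<integral>w. w \<partial>f t) - x)\<^sup>2)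
      \<longlongrightarrow> 0 + (x - x)\<^sup>2) at_top"
    by (intro tendsto_intros variance_tendsto_zero assms)
  moreover have "\<forall>\<^sub>F t in at_top. ((\<integral>w. w\<^sup>2 \<partial>f t) - (\<integral>w. w \<partial>f t)\<^sup>2) + ((\<integral>w. w \<partial>f t) - x)\<^sup>2
      = (\<integral>w. (w - x)\<^sup>2 \<partial>f t)"
    using prob_ev
  proof eventually_elim
    case (elim t)
    then show ?case
      using prob_on_interval_integral_sq_dev[OF elim, of x] by (simp add: power2_diff algebra_simps)
  qed
  ultimately show "((\<lambda>t. \<integral>w. (w - x)\<^sup>2 \<partial>f t) \<longlongrightarrow> 0) at_top"
    by (simp add: tendsto_cong)
qed

end

lemma sum_rank_weight:
  fixes y :: "nat \<Rightarrow> real"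
  shows "(\<Sum>j<N. (p + (1 - p) * (if j \<ge> i then 1 else 0)) * y j)
    = p * (\<Sum>j<N. y j) + (1 - p) * (\<Sum>j\<in>{i..<N}. y j)"
proof -
  have "(p + (1 - p) * (if j \<ge> i then 1 else 0)) * y j = p * y j + (1 - p) * (if i \<le> j then y j else 0)"
    for j by (simp add: algebra_simps)
  then have "(\<Sum>j<N. (p + (1 - p) * (if j \<ge> i then 1 else 0)) * y j)
      = p * (\<Sum>j<N. y j) + (1 - p) * (\<Sum>j<N. if i \<le> j then y j else 0)"
    by (simp only: sum.distrib sum_distrib_left)
  also have "(\<Sum>j<N. if i \<le> j then y j else 0) = (\<Sum>j\<in>{j \<in> {..<N}. i \<le> j}. y j)"
    by (rule sum.inter_filter[symmetric]) simp
  also have "{j \<in> {..<N}. i \<le> j} = {i..<N}"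
    by auto
  finally show ?thesis .
qed

definition hierarchy_mat :: "nat \<Rightarrow> real \<Rightarrow> real \<Rightarrow> (nat \<Rightarrow> real) \<Rightarrow> (nat \<Rightarrow> real) \<Rightarrow> real mat" where
  "hierarchy_mat N \<alpha> p fNS c = mat N N (\<lambda>(i, j). if i = j then (1 - \<alpha>) * fNS i - c i
     else (1 - \<alpha>) * (p + (1 - p) * (if j \<ge> i then 1 else 0)) * fNS j)"

lemma hierarchy_mat_row_sum:
  fixes y :: "nat \<Rightarrow> real"
  assumes "i < N"
  shows "(\<Sum>j<N. hierarchy_mat N \<alpha> p fNS c $$ (i, j) * y j)
    = (1 - \<alpha>) * (p * (\<Sum>j<N. fNS j * y j) + (1 - p) * (\<Sum>j\<in>{i..<N}. fNS j * y j)) - c i * y i"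
proof -
  have "hierarchy_mat N \<alpha> p fNS c $$ (i, j) * y j
      = (1 - \<alpha>) * ((p + (1 - p) * (if j \<ge> i then 1 else 0)) * (fNS j * y j))
        - (if j = i then c i * y i else 0)" if "j < N" for j
    using assms that by (auto simp: hierarchy_mat_def algebra_simps)
  then have "(\<Sum>j<N. hierarchy_mat N \<alpha> p fNS c $$ (i, j) * y j)
      = (1 - \<alpha>) * (\<Sum>j<N. (p + (1 - p) * (if j \<ge> i then 1 else 0)) * (fNS j * y j)) - c i * y i"
    using assms by (simp add: sum_subtractf sum_distrib_left)
  then show ?thesis
    by (simp only: sum_rank_weight)
qed

lemma metzler_stable_hierarchy_mat:
  assumes p: "0 < p" "p < 1" and \<alpha>: "0 < \<alpha>" "\<alpha> \<le> 1"
    and fS: "\<And>j. j < N \<Longrightarrow> 0 \<le> fS j" and fNS: "\<And>j. j < N \<Longrightarrow> 0 \<le> fNS j"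
    and fNS_sum: "(\<Sum>j<N. fNS j) = 1"
    and c: "\<And>i. c i = p + (1 - p) * (\<Sum>j\<in>{i..<N}. \<alpha> * fS j + (1 - \<alpha>) * fNS j)"
  shows "metzler_stable N (hierarchy_mat N \<alpha> p fNS c) (\<alpha> * p)"
proof
  show "0 \<le> hierarchy_mat N \<alpha> p fNS c $$ (i, j)" if "i < N" "j < N" "i \<noteq> j" for i j
    using that p \<alpha> fNS[of j] by (simp add: hierarchy_mat_def)
  show "(\<Sum>j<N. hierarchy_mat N \<alpha> p fNS c $$ (i, j)) \<le> - (\<alpha> * p)" if "i < N" for i
  proof -
    have "(\<Sum>j<N. hierarchy_mat N \<alpha> p fNS c $$ (i, j))
        = (1 - \<alpha>) * (p + (1 - p) * (\<Sum>j\<in>{i..<N}. fNS j)) - c i"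
      using hierarchy_mat_row_sum[OF that, of \<alpha> p fNS c "\<lambda>_. 1"] fNS_sum by simp
    also have "c i = p + (1 - p) * (\<alpha> * (\<Sum>j\<in>{i..<N}. fS j) + (1 - \<alpha>) * (\<Sum>j\<in>{i..<N}. fNS j))"
      by (simp add: c sum.distrib sum_distrib_left)
    finally have "(\<Sum>j<N. hierarchy_mat N \<alpha> p fNS c $$ (i, j))
        = - (\<alpha> * p) - (1 - p) * (\<alpha> * (\<Sum>j\<in>{i..<N}. fS j))"
      by (simp add: algebra_simps)
    moreover have "0 \<le> (1 - p) * (\<alpha> * (\<Sum>j\<in>{i..<N}. fS j))"
      using p \<alpha> fS by (intro mult_nonneg_nonneg sum_nonneg) auto
    ultimately show ?thesis by linarith
  qed
  show "0 < \<alpha> * p" using p \<alpha> by simp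
qed

lemma hierarchy_mean_drift:
  fixes y :: "nat \<Rightarrow> real"
  assumes "i < N"
  shows "p * (\<alpha> * (\<Sum>j<N. fS j * mS j) + (1 - \<alpha>) * (\<Sum>j<N. fNS j * y j))
      + (1 - p) * (\<alpha> * (\<Sum>j\<in>{i..<N}. fS j * mS j) + (1 - \<alpha>) * (\<Sum>j\<in>{i..<N}. fNS j * y j))
      - c i * y i
    = (\<Sum>j<N. hierarchy_mat N \<alpha> p fNS c $$ (i, j) * y j)
      + \<alpha> * (\<Sum>j<N. mS j * (p + (1 - p) * (if j \<ge> i then 1 else 0)) * fS j)"
proof -
  have "(\<Sum>j<N. mS j * (p + (1 - p) * (if j \<ge> i then 1 else 0)) * fS j)
      = (\<Sum>j<N. (p + (1 - p) * (if j \<ge> i then 1 else 0)) * (fS j * mS j))"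
    by (simp add: mult_ac)
  also have "\<dots> = p * (\<Sum>j<N. fS j * mS j) + (1 - p) * (\<Sum>j\<in>{i..<N}. fS j * mS j)"
    by (rule sum_rank_weight)
  finally have weights: "(\<Sum>j<N. mS j * (p + (1 - p) * (if j \<ge> i then 1 else 0)) * fS j)
      = p * (\<Sum>j<N. fS j * mS j) + (1 - p) * (\<Sum>j\<in>{i..<N}. fS j * mS j)" .
  show ?thesis
    unfolding weights hierarchy_mat_row_sum[OF assms] by (simp add: algebra_simps)
qed

theorem theorem4p6:
  fixes p \<alpha> :: real and N :: nat
    and h :: "nat \<Rightarrow> real"
    and fS fNS :: "nat \<Rightarrow> real"
    and mS :: "nat \<Rightarrow> real"
    and f0 :: "nat \<Rightarrow> real measure"
    and f :: "nat \<Rightarrow> real \<Rightarrow> real measure"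
  defines "F0 \<equiv> (\<lambda>j. \<alpha> * fS j + (1 - \<alpha>) * fNS j)"
  defines "F0up \<equiv> (\<lambda>i. \<Sum>j\<in>{i..<N}. F0 j)"
  defines "mNS \<equiv> (\<lambda>j t. \<integral>w. w \<partial>(f j t))"
  defines "m \<equiv> (\<lambda>t. \<alpha> * (\<Sum>j<N. fS j * mS j) + (1 - \<alpha>) * (\<Sum>j<N. fNS j * mNS j t))"
  defines "\<beta> \<equiv> (\<lambda>i t. \<alpha> * (\<Sum>j\<in>{i..<N}. fS j * mS j) + (1 - \<alpha>) * (\<Sum>j\<in>{i..<N}. fNS j * mNS j t))"
  defines "A \<equiv> mat N N (\<lambda>(i, j). if i = j
                 then (1 - \<alpha>) * fNS i - (p + (1 - p) * F0up i)
                 else (1 - \<alpha>) * (p + (1 - p) * (if j \<ge> i then 1 else 0)) * fNS j)"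
  defines "B \<equiv> vec N (\<lambda>i. \<alpha> * (\<Sum>j<N. mS j * (p + (1 - p) * (if j \<ge> i then 1 else 0)) * fS j))"
  assumes p: "0 < p" "p < 1"
    and alpha: "0 < \<alpha>" "\<alpha> \<le> 1"
    and h_mono: "\<And>i j. i < j \<Longrightarrow> j < N \<Longrightarrow> h i < h j"
    and h_range: "\<And>i. i < N \<Longrightarrow> 0 \<le> h i \<and> h i \<le> 1"
    and fS_nonneg: "\<And>j. j < N \<Longrightarrow> 0 \<le> fS j"
    and fNS_nonneg: "\<And>j. j < N \<Longrightarrow> 0 \<le> fNS j"
    and fS_sum: "(\<Sum>j<N. fS j) = 1"
    and fNS_sum: "(\<Sum>j<N. fNS j) = 1"
    and last_pos: "F0 (N - 1) > 0"
    and mS_range: "\<And>j. j < N \<Longrightarrow> -1 \<le> mS j \<and> mS j \<le> 1"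
    and f0_prob: "\<And>i. i < N \<Longrightarrow> prob_on_interval (f0 i)"
    and f_prob: "\<And>i t. i < N \<Longrightarrow> 0 \<le> t \<Longrightarrow> prob_on_interval (f i t)"
    and f_cont: "\<And>i. i < N \<Longrightarrow> weak_continuous_on {0..} (f i)"
    and f_init: "\<And>i. i < N \<Longrightarrow> f i 0 = f0 i"
    and f_eq: "\<And>i t \<phi> \<phi>'. i < N \<Longrightarrow> 0 \<le> t \<Longrightarrow>
        (\<forall>w. (\<phi> has_real_derivative \<phi>' w) (at w)) \<Longrightarrow> continuous_on UNIV \<phi>' \<Longrightarrow>
        (\<integral>w. \<phi> w \<partial>(f i t)) = (\<integral>w. \<phi> w \<partial>(f0 i)) +
          integral {0..t} (\<lambda>s. \<integral>w. \<phi>' w * (p * (m s - w) + (1 - p) * (\<beta> i s - F0up i * w)) \<partial>(f i s))"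
  shows "invertible_mat A \<and>
         (let minf = - (the (mat_inverse A) *\<^sub>v B)
          in \<forall>i<N. weak_conv_at_top (f i) (dirac (minf $ i)))"
proof -
  define c where "c i = p + (1 - p) * F0up i" for i
  define P where "P i t = p * m t + (1 - p) * \<beta> i t" for i t
  have A_eq: "A = hierarchy_mat N \<alpha> p fNS c"
    unfolding A_def hierarchy_mat_def c_def ..
  have A_carrier: "A \<in> carrier_mat N N" and B_carrier: "B \<in> carrier_vec N"
    by (simp_all add: A_def B_def)
  interpret metzler_stable N A "\<alpha> * p"
    unfolding A_eq using p alpha fS_nonneg fNS_nonneg fNS_sum
    by (intro metzler_stable_hierarchy_mat) (auto simp: c_def F0up_def F0_def)
  have c_pos: "0 < c i" for i
    unfolding c_def F0up_def F0_def using p alpha fS_nonneg fNS_nonneg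
    by (intro add_pos_nonneg mult_nonneg_nonneg sum_nonneg add_nonneg_nonneg) auto
  have mean_cont: "continuous_on {0..} (mNS j)" if "j < N" for j
    using f_cont[OF that, unfolded weak_continuous_on_def, rule_format, OF continuous_on_id]
    unfolding mNS_def .
  have drift: "linear_drift_solution (f i) (P i) (c i)" if "i < N" for i
  proof
    show "continuous_on {0..} (P i)"
      unfolding P_def m_def \<beta>_def by (intro continuous_intros) (use mean_cont in auto)
    have "p * (m s - w) + (1 - p) * (\<beta> i s - F0up i * w) = P i s - c i * w" for s w
      by (simp add: P_def c_def algebra_simps)
    then show "(\<integral>w. \<phi> w \<partial>f i t) = (\<integral>w. \<phi> w \<partial>f i 0)
        + integral {0..t} (\<lambda>s. \<integral>w. \<phi>' w * (P i s - c i * w) \<partial>f i s)"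
      if "0 \<le> t" "\<forall>w. (\<phi> has_real_derivative \<phi>' w) (at w)" "continuous_on UNIV \<phi>'" for t \<phi> \<phi>'
      using f_eq[OF \<open>i < N\<close> that] f_init[OF \<open>i < N\<close>] by simp
  qed (use f_prob f_cont that in auto)
  have mean_drift: "P i t - c i * mNS i t = (\<Sum>k<N. A $$ (i, k) * mNS k t) + B $ i" if "i < N" for i t
    unfolding P_def m_def \<beta>_def A_eq B_def index_vec[OF that]
    by (rule hierarchy_mean_drift[OF that])
  have mean_lim: "(mNS i \<longlongrightarrow> (- (the (mat_inverse A) *\<^sub>v B)) $ i) at_top" if "i < N" for i
  proof (rule affine_solution_tendsto_equilibrium[OF A_carrier B_carrier mean_cont _ that])
    show "(mNS j has_real_derivative (\<Sum>k<N. A $$ (j, k) * mNS k t) + B $ j) (at t)"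
      if "j < N" "0 < t" for j t
      using linear_drift_solution.mean_has_derivative[OF drift[OF that(1)] that(2)]
      unfolding mean_drift[OF that(1), symmetric] unfolding mNS_def .
  qed
  have "weak_conv_at_top (f i) (dirac ((- (the (mat_inverse A) *\<^sub>v B)) $ i))" if "i < N" for i
    using linear_drift_solution.weak_conv_dirac[OF drift[OF that] c_pos mean_lim[OF that, unfolded mNS_def]] .
  with invertible[OF A_carrier] show ?thesis
    unfolding Let_def by blast
qed

end
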